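(* Let $\mathcal H$ be a directed subfamily of $(\mathcal P(\omega_1),\subseteq^* )$. If $X\subseteq\omega_1$ is locally in the ideal generated by $\mathcal H\cup\mathrm{Fin}(\omega_1)$, then there is a finite $s\subseteq X$ such that $X\setminus s$ is locally in $\downarrow\mathcal H$.
   Context: $x\subseteq^*y$ means $x\setminus y$ is finite; directed means any two members have a $\subseteq^*$-upper bound in $\mathcal H$. $\mathrm{Fin}(\omega_1)$ is the set of finite subsets of $\omega_1$; the ideal generated by a family consists of all subsets of finite unions of its members. $\downarrow\mathcal H=\bigcup_{x\in\mathcal H}\mathcal P(x)$. A set is locally in a family $\mathcal K$ if all its countable subsets belong to $\mathcal K$. *)

theory Defs
  imports Main "HOL-Library.Countable_Set"
begin

text \<open>omega_1, realised as the field of the successor cardinal of natLeq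
  (the canonical well-order of the first uncountable cardinal in HOL's cardinal library).\<close>
definition omega1 :: "nat set set" where
  "omega1 = Field (cardSuc natLeq)"

definition almost_subset :: "'a set \<Rightarrow> 'a set \<Rightarrow> bool" (infix "\<subseteq>\<^sup>*" 50) where
  "x \<subseteq>\<^sup>* y \<longleftrightarrow> finite (x - y)"

definition directed_ae :: "'a set set \<Rightarrow> bool" where
  "directed_ae H \<longleftrightarrow> (\<forall>x\<in>H. \<forall>y\<in>H. \<exists>z\<in>H. x \<subseteq>\<^sup>* z \<and> y \<subseteq>\<^sup>* z)"

definition Fin :: "'a set \<Rightarrow> 'a set set" where
  "Fin U = {s. s \<subseteq> U \<and> finite s}"

definition ideal_gen :: "'a set \<Rightarrow> 'a set set \<Rightarrow> 'a set set" where
  "ideal_gen U F = {A. A \<subseteq> U \<and> (\<exists>G. finite G \<and> G \<subseteq> F \<and> A \<subseteq> \<Union>G)}"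

definition downset :: "'a set set \<Rightarrow> 'a set set" where
  "downset H = (\<Union>x\<in>H. Pow x)"

definition locally_in :: "'a set \<Rightarrow> 'a set set \<Rightarrow> bool" where
  "locally_in X K \<longleftrightarrow> (\<forall>Y. Y \<subseteq> X \<and> countable Y \<longrightarrow> Y \<in> K)"

end

theory Submission
  imports Defs
begin

text \<open>Suppose no finite \<open>s \<subseteq> X\<close> works, and pick for each finite \<open>s \<subseteq> X\<close> a countable
  witness \<open>Y s \<subseteq> X - s\<close> outside \<open>\<down>\<H>\<close>. Closing off \<omega> times (a countable set has only
  countably many finite subsets) gives a countable \<open>Z \<subseteq> X\<close> containing \<open>Y s\<close> for every finite
  \<open>s \<subseteq> Z\<close>. As \<open>Z\<close> is in the generated ideal and \<open>\<H>\<close> is directed, \<open>Z \<subseteq>\<^sup>* h\<close> for some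
  \<open>h \<in> \<H>\<close>. Then \<open>s = Z - h\<close> is finite, and \<open>Y s \<subseteq> Z - s \<subseteq> h\<close> puts \<open>Y s\<close> into \<open>\<down>\<H>\<close>,
  a contradiction.\<close>

lemma directed_ae_Union_almost_subset:
  assumes "H \<noteq> {}" "directed_ae H" "finite G" "G \<subseteq> H \<union> Collect finite"
  shows "\<exists>h\<in>H. \<Union>G \<subseteq>\<^sup>* h"
  using assms(3,4)
proof (induction G rule: finite_induct)
  case empty
  then show ?case using assms(1) by (auto simp: almost_subset_def)
next
  case (insert g G)
  then obtain h where h: "h \<in> H" "finite (\<Union>G - h)"
    by (auto simp: almost_subset_def)
  show ?case
  proof (cases "g \<in> H")
    case True
    then obtain z where z: "z \<in> H" "finite (h - z)" "finite (g - z)"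
      using assms(2) h(1) unfolding directed_ae_def almost_subset_def by blast
    have "\<Union>(insert g G) - z \<subseteq> (\<Union>G - h) \<union> (h - z) \<union> (g - z)" by blast
    then show ?thesis
      using z h unfolding almost_subset_def by (meson finite_UnI finite_subset)
  next
    case False
    then have "finite g" using insert.prems by auto
    have "\<Union>(insert g G) - h \<subseteq> (\<Union>G - h) \<union> g" by blast
    then show ?thesis
      using h \<open>finite g\<close> unfolding almost_subset_def by (meson finite_UnI finite_subset)
  qed
qed

lemma ideal_gen_Fin_almost_subset:
  assumes "H \<noteq> {}" "directed_ae H" "A \<in> ideal_gen U (H \<union> Fin U)"
  shows "\<exists>h\<in>H. A \<subseteq>\<^sup>* h"
proof -
  obtain G where G: "finite G" "G \<subseteq> H \<union> Fin U" "A \<subseteq> \<Union>G"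
    using assms(3) unfolding ideal_gen_def by blast
  then have "G \<subseteq> H \<union> Collect finite" by (auto simp: Fin_def)
  then obtain h where "h \<in> H" "finite (\<Union>G - h)"
    using directed_ae_Union_almost_subset[OF assms(1,2) G(1)]
    by (auto simp: almost_subset_def)
  moreover have "A - h \<subseteq> \<Union>G - h" using G(3) by blast
  ultimately show ?thesis by (auto simp: almost_subset_def intro: finite_subset)
qed

lemma finite_subset_Union_mono:
  fixes Z :: "nat \<Rightarrow> 'a set"
  assumes "mono Z" "finite s" "s \<subseteq> (\<Union>n. Z n)"
  obtains n where "s \<subseteq> Z n"
proof -
  have "chain\<^sub>\<subseteq> (range Z)"
    unfolding chain_subset_def
  proof (intro ballI)
    fix A B assume "A \<in> range Z" "B \<in> range Z"
    then obtain m n where "A = Z m" "B = Z n" by blast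
    then show "A \<subseteq> B \<or> B \<subseteq> A"
      using nat_le_linear[of m n] monoD[OF assms(1)] by blast
  qed
  then obtain B where "B \<in> range Z" "s \<subseteq> B"
    using finite_subset_Union_chain[OF assms(2,3)] by (auto simp: chain_subset_alt_def)
  then show thesis using that by blast
qed

lemma countable_subset_closed_under_finite:
  assumes F: "\<And>s. finite s \<Longrightarrow> s \<subseteq> X \<Longrightarrow> F s \<subseteq> X \<and> countable (F s)"
  obtains Z where "Z \<subseteq> X" "countable Z" "\<And>s. finite s \<Longrightarrow> s \<subseteq> Z \<Longrightarrow> F s \<subseteq> Z"
proof -
  define step where "step W = W \<union> \<Union>(F ` {s. finite s \<and> s \<subseteq> W})" for W
  define Z where "Z n = (step ^^ n) {}" for n
  have Z_Suc: "Z (Suc n) = step (Z n)" for n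
    unfolding Z_def by simp
  have Z_small: "Z n \<subseteq> X \<and> countable (Z n)" for n
  proof (induction n)
    case 0
    then show ?case unfolding Z_def by simp
  next
    case (Suc n)
    have "countable {s. finite s \<and> s \<subseteq> Z n}"
      using Suc countable_Collect_finite_subset by blast
    then have "countable (\<Union>(F ` {s. finite s \<and> s \<subseteq> Z n}))"
      using F Suc by (intro countable_UN) auto
    moreover have "\<Union>(F ` {s. finite s \<and> s \<subseteq> Z n}) \<subseteq> X"
      using F Suc by blast
    ultimately show ?case using Suc unfolding Z_Suc step_def by auto
  qed
  have "mono Z"
    by (rule mono_iff_le_Suc[THEN iffD2]) (auto simp: Z_Suc step_def)
  show thesis
  proof
    show "(\<Union>n. Z n) \<subseteq> X" "countable (\<Union>n. Z n)"
      using Z_small by auto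
    fix s assume "finite s" "s \<subseteq> (\<Union>n. Z n)"
    then obtain n where "s \<subseteq> Z n"
      using finite_subset_Union_mono[OF \<open>mono Z\<close>] by blast
    then have "F s \<subseteq> Z (Suc n)"
      using \<open>finite s\<close> unfolding Z_Suc step_def by blast
    then show "F s \<subseteq> (\<Union>n. Z n)" by blast
  qed
qed

theorem lemma2p4:
  fixes H :: "nat set set set" and X :: "nat set set"
  assumes "H \<subseteq> Pow omega1" and "H \<noteq> {}" and "directed_ae H"
    and "X \<subseteq> omega1"
    and "locally_in X (ideal_gen omega1 (H \<union> Fin omega1))"
  shows "\<exists>s. finite s \<and> s \<subseteq> X \<and> locally_in (X - s) (downset H)"
proof (rule ccontr)
  assume "\<not> ?thesis"
  then have "\<forall>s. \<exists>Y. finite s \<and> s \<subseteq> X \<longrightarrow> Y \<subseteq> X - s \<and> countable Y \<and> Y \<notin> downset H"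
    unfolding locally_in_def by blast
  then obtain Y where Y: "\<And>s. finite s \<Longrightarrow> s \<subseteq> X \<Longrightarrow>
      Y s \<subseteq> X - s \<and> countable (Y s) \<and> Y s \<notin> downset H"
    by metis
  then have Y_small: "\<And>s. finite s \<Longrightarrow> s \<subseteq> X \<Longrightarrow> Y s \<subseteq> X \<and> countable (Y s)"
    by blast
  obtain Z where Z: "Z \<subseteq> X" "countable Z"
    and Z_closed: "\<And>s. finite s \<Longrightarrow> s \<subseteq> Z \<Longrightarrow> Y s \<subseteq> Z"
    using countable_subset_closed_under_finite[of X Y, OF Y_small] by blast
  have "Z \<in> ideal_gen omega1 (H \<union> Fin omega1)"
    using assms(5) Z unfolding locally_in_def by blast
  then obtain h where h: "h \<in> H" "Z \<subseteq>\<^sup>* h"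
    using ideal_gen_Fin_almost_subset[OF assms(2,3)] by blast
  define s where "s = Z - h"
  have s: "finite s" "s \<subseteq> X" "s \<subseteq> Z"
    using h(2) Z(1) unfolding s_def almost_subset_def by auto
  have "Y s \<subseteq> h"
    using Z_closed[OF s(1,3)] Y[OF s(1,2)] unfolding s_def by blast
  then have "Y s \<in> downset H"
    using h(1) unfolding downset_def by blast
  then show False
    using Y[OF s(1,2)] by blast
qed

end
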